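(* Let $\tilde c(n)$ be the number of (isomorphism classes of) trees $T\in\mathcal{T}_n$ with $\mathcal{C}(T)=c_n$. Then $\tilde c(1)=1$ and for every $n\ge2$, $$\tilde c(n)=\sum_{(n_a,n_b)\in\widetilde{QB}(n)}\tilde c(n_a)\,\tilde c(n_b)+\binom{\tilde c(n/2)+1}{2}\,\delta_{even}(n),$$ where $\widetilde{QB}(n)=\{(n_a,n_b)\in QB(n): n_a>n_b\}$ and $\delta_{even}(n)=1$ if $n$ is even and $0$ otherwise.
   Context: Bifurcating trees: rooted trees in which every internal node has exactly two children; $\mathcal{T}_n$ is the set of isomorphism classes of bifurcating trees with $n$ leaves. The Colless index is $\mathcal{C}(T)=\sum_{v}|\kappa_T(v_1)-\kappa_T(v_2)|$, summed over internal nodes $v$ with children $v_1,v_2$, where $\kappa_T(w)$ is the number of leaves descending from $w$; $c_n=\min\{\mathcal{C}(T):T\in\mathcal{T}_n\}$. For $n\ge2$, $QB(n)=\{(n_a,n_b)\in\mathbb{N}^2: n_a\ge n_b\ge1,\ n_a+n_b=n,\ c_{n_a}+c_{n_b}+n_a-n_b=c_n\}$. *)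

theory Defs
  imports Main
begin

text \<open>Bifurcating (rooted, every internal node has exactly two children) trees,
  represented as ordered binary trees; isomorphism classes are obtained
  by quotienting by the rooted-tree isomorphism relation (swapping children).\<close>

datatype btree = Leaf | Node btree btree

fun leaves :: "btree \<Rightarrow> nat" where
  "leaves Leaf = 1"
| "leaves (Node l r) = leaves l + leaves r"

fun colless :: "btree \<Rightarrow> nat" where
  "colless Leaf = 0"
| "colless (Node l r) = colless l + colless r + nat \<bar>int (leaves l) - int (leaves r)\<bar>"

inductive tree_iso :: "btree \<Rightarrow> btree \<Rightarrow> bool" where
  iso_leaf: "tree_iso Leaf Leaf"
| iso_node: "tree_iso l l' \<Longrightarrow> tree_iso r r' \<Longrightarrow> tree_iso (Node l r) (Node l' r')"
| iso_swap: "tree_iso l r' \<Longrightarrow> tree_iso r l' \<Longrightarrow> tree_iso (Node l r) (Node l' r')"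

definition iso_rel :: "(btree \<times> btree) set" where
  "iso_rel = {(S, T). tree_iso S T}"

definition min_colless :: "nat \<Rightarrow> nat" where
  "min_colless n = Min (colless ` {T. leaves T = n})"

definition num_min :: "nat \<Rightarrow> nat" where
  "num_min n = card ({T. leaves T = n \<and> colless T = min_colless n} // iso_rel)"

definition QB :: "nat \<Rightarrow> (nat \<times> nat) set" where
  "QB n = {(na, nb). na \<ge> nb \<and> nb \<ge> 1 \<and> na + nb = n \<and>
                     min_colless na + min_colless nb + (na - nb) = min_colless n}"

definition QB_strict :: "nat \<Rightarrow> (nat \<times> nat) set" where
  "QB_strict n = {(na, nb) \<in> QB n. na > nb}"

end

theory Submission
  imports Defs "HOL-Library.Nat_Bijection"
begin

text \<open>
  The minimal Colless index c(n) is that of the maximally balanced tree, with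
  c(n) = c(\<lceil>n/2\<rceil>) + c(\<lfloor>n/2\<rfloor>) + (n mod 2), and satisfies
  c(a + b) \<le> c(a) + c(b) + |a - b|: split a and b into halves and pair the larger half of a
  with the smaller half of b. Hence a tree is minimal iff both of its subtrees are minimal and its
  root split lies in QB(n), up to order. Representing an isomorphism class by the tree whose two
  children are sorted at every node, the minimal classes with n leaves are the unordered pairs of
  minimal classes over the splits in QB(n). A split n_a > n_b contributes a product of
  class counts, and the split n/2 + n/2, which lies in QB(n) because c(2m) = 2 c(m), contributes
  the two-element multisets of minimal classes with n/2 leaves.
\<close>

function bal_colless :: "nat \<Rightarrow> nat" where
  "bal_colless n =
     (if n \<le> 1 then 0 else bal_colless ((n + 1) div 2) + bal_colless (n div 2) + n mod 2)"
  by auto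
termination by (relation "measure id") auto

declare bal_colless.simps [simp del]

lemma bal_colless_le_1 [simp]: "n \<le> 1 \<Longrightarrow> bal_colless n = 0"
  by (simp add: bal_colless.simps)

lemma bal_colless_near_halves:
  assumes "a \<le> b + 1" "b \<le> a + 1" "2 \<le> a + b"
  shows "bal_colless (a + b) = bal_colless a + bal_colless b + (a + b) mod 2"
proof (cases "b \<le> a")
  case True
  then have "(a + b + 1) div 2 = a" "(a + b) div 2 = b"
    using assms by linarith+
  then show ?thesis
    using assms by (subst bal_colless.simps) simp
next
  case False
  then have "(a + b + 1) div 2 = b" "(a + b) div 2 = a"
    using assms by linarith+
  then show ?thesis
    using assms by (subst bal_colless.simps) simp
qed

lemma bal_colless_add_le:
  "y \<le> x \<Longrightarrow> bal_colless (x + y) \<le> bal_colless x + bal_colless y + (x - y)"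
proof (induction "x + y" arbitrary: x y rule: less_induct)
  case less
  note IH = less.hyps
  define x2 xm where "x2 = x div 2" and "xm = x mod 2"
  have x: "x = 2 * x2 + xm" "xm \<le> 1" unfolding x2_def xm_def by simp_all
  have bx: "bal_colless x = bal_colless (x2 + xm) + bal_colless x2 + xm" if "2 \<le> x"
  proof -
    have e: "x2 + xm + x2 = x" using x by simp
    show ?thesis
      using bal_colless_near_halves[of "x2 + xm" x2, unfolded e] x(2) that by (simp add: xm_def)
  qed
  consider "y = 0" | "1 \<le> y" "x \<le> y + 1" | "y = 1" "y + 2 \<le> x" | "2 \<le> y" "y + 2 \<le> x"
    using less.prems by linarith
  then show ?case
  proof cases
    case 1
    then show ?thesis by simp
  next
    case 2
    then show ?thesis
      using less.prems bal_colless_near_halves[of x y] by (cases "x = y") simp_all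
  next
    case 3
    have e: "x2 + 1 + (x2 + xm) = x + y" using x 3 by simp
    have "bal_colless (x + y) = bal_colless (x2 + 1) + bal_colless (x2 + xm) + (x + y) mod 2"
      using bal_colless_near_halves[of "x2 + 1" "x2 + xm", unfolded e] x(2) 3 by simp
    moreover have "bal_colless (x2 + 1) \<le> bal_colless x2 + (x2 - 1)"
      using IH[of x2 1] x 3 by simp
    moreover have "(x + y) mod 2 \<le> 1" by simp
    ultimately show ?thesis
      using bx x 3 by simp
  next
    case 4
    define y2 ym where "y2 = y div 2" and "ym = y mod 2"
    have y: "y = 2 * y2 + ym" "ym \<le> 1" unfolding y2_def ym_def by simp_all
    have by': "bal_colless y = bal_colless (y2 + ym) + bal_colless y2 + ym"
    proof -
      have e: "y2 + ym + y2 = y" using y by simp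
      show ?thesis
        using bal_colless_near_halves[of "y2 + ym" y2, unfolded e] y(2) 4 by (simp add: ym_def)
    qed
    have e: "x2 + xm + y2 + (x2 + (y2 + ym)) = x + y" using x y by simp
    have "bal_colless (x + y) =
        bal_colless (x2 + xm + y2) + bal_colless (x2 + (y2 + ym)) + (x + y) mod 2"
      using bal_colless_near_halves[of "x2 + xm + y2" "x2 + (y2 + ym)", unfolded e] x(2) y(2) 4
      by simp
    moreover have "bal_colless (x2 + xm + y2) \<le>
        bal_colless (x2 + xm) + bal_colless y2 + (x2 + xm - y2)"
      using IH[of "x2 + xm" y2] x y 4 by simp
    moreover have "bal_colless (x2 + (y2 + ym)) \<le>
        bal_colless x2 + bal_colless (y2 + ym) + (x2 - (y2 + ym))"
      using IH[of x2 "y2 + ym"] x y 4 by simp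
    moreover have "(x + y) mod 2 \<le> xm + ym" unfolding xm_def ym_def by presburger
    ultimately show ?thesis
      using bx by' x y 4 by simp
  qed
qed

lemma bal_colless_add_le_abs:
  "bal_colless (x + y) \<le> bal_colless x + bal_colless y + nat \<bar>int x - int y\<bar>"
  using bal_colless_add_le[of y x] bal_colless_add_le[of x y]
  by (cases "y \<le> x") (simp_all add: add.commute)

lemma leaves_pos: "0 < leaves T"
  by (induction T) auto

lemma bal_colless_le_colless: "bal_colless (leaves T) \<le> colless T"
proof (induction T)
  case (Node l r)
  then show ?case
    using bal_colless_add_le_abs[of "leaves l" "leaves r"] by simp
qed simp

lemma ex_colless_eq_bal_colless:
  "0 < n \<Longrightarrow> \<exists>T. leaves T = n \<and> colless T = bal_colless n"
proof (induction n rule: less_induct)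
  case (less n)
  show ?case
  proof (cases "n = 1")
    case True
    then show ?thesis by (intro exI[of _ Leaf]) simp
  next
    case False
    then have n: "2 \<le> n" using less.prems by simp
    have halves: "n div 2 + n mod 2 < n" "1 \<le> n div 2"
      using n by presburger+
    obtain l where l: "leaves l = n div 2 + n mod 2" "colless l = bal_colless (n div 2 + n mod 2)"
      using less.IH[of "n div 2 + n mod 2"] halves by fastforce
    obtain r where r: "leaves r = n div 2" "colless r = bal_colless (n div 2)"
      using less.IH[of "n div 2"] halves by fastforce
    have e: "n div 2 + n mod 2 + n div 2 = n" by presburger
    have "n mod 2 \<le> 1" by simp
    then show ?thesis
      using bal_colless_near_halves[of "n div 2 + n mod 2" "n div 2", unfolded e] e n l r
      by (intro exI[of _ "Node l r"]) simp
  qed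
qed

lemma finite_leaves_eq: "finite {T. leaves T = n}"
proof (induction n rule: less_induct)
  case (less n)
  define S where "S = {T. leaves T < n}"
  have "S = (\<Union>a<n. {T. leaves T = a})"
    by (auto simp: S_def)
  then have "finite S"
    using less.IH by simp
  moreover have "{T. leaves T = n} \<subseteq> insert Leaf (case_prod Node ` (S \<times> S))"
  proof
    fix T assume T: "T \<in> {T. leaves T = n}"
    show "T \<in> insert Leaf (case_prod Node ` (S \<times> S))"
    proof (cases T)
      case (Node l r)
      then have "(l, r) \<in> S \<times> S"
        using T leaves_pos[of l] leaves_pos[of r] by (simp add: S_def)
      then show ?thesis
        using Node by (auto intro: rev_image_eqI)
    qed simp
  qed
  ultimately show ?case
    by (simp add: finite_subset)
qed

lemma min_colless_eq_bal_colless: "0 < n \<Longrightarrow> min_colless n = bal_colless n"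
  unfolding min_colless_def
proof (rule Min_eqI)
  show "finite (colless ` {T. leaves T = n})"
    using finite_leaves_eq by simp
  show "bal_colless n \<le> c" if "c \<in> colless ` {T. leaves T = n}" for c
    using that bal_colless_le_colless by auto
  assume "0 < n"
  then obtain T where "leaves T = n" "colless T = bal_colless n"
    using ex_colless_eq_bal_colless by blast
  then show "bal_colless n \<in> colless ` {T. leaves T = n}"
    by (auto intro: rev_image_eqI)
qed

lemma min_colless_double:
  assumes "0 < m"
  shows "min_colless (2 * m) = 2 * min_colless m"
  using assms bal_colless_near_halves[of m m] by (simp add: min_colless_eq_bal_colless mult_2)

definition min_trees :: "nat \<Rightarrow> btree set" where
  "min_trees n = {T. leaves T = n \<and> colless T = min_colless n}"

lemma leaves_eq_1_iff: "leaves T = 1 \<longleftrightarrow> T = Leaf"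
proof (cases T)
  case (Node l r)
  then show ?thesis
    using leaves_pos[of l] leaves_pos[of r] by simp
qed simp

lemma min_trees_1: "min_trees 1 = {Leaf}"
proof -
  have "min_colless 1 = 0"
    by (simp add: min_colless_eq_bal_colless)
  then show ?thesis
    unfolding min_trees_def leaves_eq_1_iff by auto
qed

lemma in_QB_or_swap_iff:
  "(a, b) \<in> QB n \<or> (b, a) \<in> QB n \<longleftrightarrow>
     0 < a \<and> 0 < b \<and> a + b = n \<and>
     min_colless a + min_colless b + nat \<bar>int a - int b\<bar> = min_colless n"
  by (cases "b \<le> a") (auto simp: QB_def)

lemma Node_in_min_trees_iff:
  "Node l r \<in> min_trees n \<longleftrightarrow>
     l \<in> min_trees (leaves l) \<and> r \<in> min_trees (leaves r) \<and>
     ((leaves l, leaves r) \<in> QB n \<or> (leaves r, leaves l) \<in> QB n)"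
proof -
  obtain a b where ab: "leaves l = a" "leaves r = b" by blast
  have "0 < a" "0 < b" "bal_colless a \<le> colless l" "bal_colless b \<le> colless r"
    using leaves_pos[of l] leaves_pos[of r] bal_colless_le_colless[of l] bal_colless_le_colless[of r]
    unfolding ab by simp_all
  moreover have "bal_colless (a + b) \<le> bal_colless a + bal_colless b + nat \<bar>int a - int b\<bar>"
    by (rule bal_colless_add_le_abs)
  ultimately show ?thesis
    unfolding in_QB_or_swap_iff
    using ab by (cases "a + b = n") (auto simp: min_trees_def min_colless_eq_bal_colless)
qed

text \<open>Only injectivity matters: the code fixes the order in which \<open>sorted_node\<close> lists
  two children, so that isomorphic trees get equal canonical forms.\<close>

fun btree_encode :: "btree \<Rightarrow> nat" where
  "btree_encode Leaf = 0"
| "btree_encode (Node l r) = Suc (prod_encode (btree_encode l, btree_encode r))"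

lemma btree_encode_eq_iff [simp]: "btree_encode S = btree_encode T \<longleftrightarrow> S = T"
proof
  show "btree_encode S = btree_encode T \<Longrightarrow> S = T"
  proof (induction S arbitrary: T)
    case Leaf
    then show ?case by (cases T) auto
  next
    case (Node l r)
    then show ?case by (cases T) auto
  qed
qed simp

definition sorted_node :: "btree \<Rightarrow> btree \<Rightarrow> btree" where
  "sorted_node x y = (if btree_encode x \<le> btree_encode y then Node x y else Node y x)"

lemma sorted_node_eq_iff: "sorted_node x y = sorted_node x' y' \<longleftrightarrow> {x, y} = {x', y'}"
  unfolding sorted_node_def doubleton_eq_iff
  by (auto split: if_splits dest: le_antisym)

lemma sorted_node_commute: "sorted_node x y = sorted_node y x"
  by (simp add: sorted_node_eq_iff insert_commute)

lemma sorted_node_neq_Leaf: "sorted_node x y \<noteq> Leaf"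
  by (simp add: sorted_node_def)

lemma leaves_sorted_node [simp]: "leaves (sorted_node x y) = leaves x + leaves y"
  by (simp add: sorted_node_def)

fun canon :: "btree \<Rightarrow> btree" where
  "canon Leaf = Leaf"
| "canon (Node l r) = sorted_node (canon l) (canon r)"

lemma leaves_canon [simp]: "leaves (canon T) = leaves T"
  by (induction T) auto

lemma canon_eq_Leaf_iff: "canon T = Leaf \<longleftrightarrow> T = Leaf"
  by (cases T) (simp_all add: sorted_node_neq_Leaf)

lemma tree_iso_iff_canon_eq: "tree_iso S T \<longleftrightarrow> canon S = canon T"
proof
  show "tree_iso S T \<Longrightarrow> canon S = canon T"
    by (induction rule: tree_iso.induct) (auto intro: sorted_node_commute)
  show "canon S = canon T \<Longrightarrow> tree_iso S T"
  proof (induction S arbitrary: T)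
    case Leaf
    then show ?case
      by (metis canon_eq_Leaf_iff iso_leaf)
  next
    case (Node l r)
    then obtain l' r' where T: "T = Node l' r'"
      by (cases T) (auto simp: sorted_node_neq_Leaf)
    with Node.prems have "{canon l, canon r} = {canon l', canon r'}"
      by (simp add: sorted_node_eq_iff)
    then show ?case
      unfolding T doubleton_eq_iff using Node.IH by (auto intro: iso_node iso_swap)
  qed
qed

lemma card_quotient_iso_rel: "card (A // iso_rel) = card (canon ` A)"
proof -
  have "iso_rel `` {T} = canon -` {canon T}" for T
    by (auto simp: iso_rel_def tree_iso_iff_canon_eq)
  then have "A // iso_rel = (\<lambda>c. canon -` {c}) ` canon ` A"
    unfolding quotient_def by auto
  moreover have "inj_on (\<lambda>c. canon -` {c}) (canon ` A)"
    by (auto simp: inj_on_def)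
  ultimately show ?thesis
    by (simp add: card_image)
qed

lemma num_min_eq_card_canon: "num_min n = card (canon ` min_trees n)"
  unfolding num_min_def min_trees_def by (rule card_quotient_iso_rel)

lemma card_image_eq_card_image:
  assumes "\<And>x y. x \<in> S \<Longrightarrow> y \<in> S \<Longrightarrow> f x = f y \<longleftrightarrow> g x = g y"
  shows "card (f ` S) = card (g ` S)"
proof -
  define h where "h = f \<circ> inv_into S g"
  have h: "h (g x) = f x" if "x \<in> S" for x
    using assms[of "inv_into S g (g x)" x] that
    by (simp add: h_def inv_into_into f_inv_into_f)
  then have "h ` g ` S = f ` S"
    by (simp add: image_image cong: image_cong)
  moreover have "inj_on h (g ` S)"
    using h assms by (auto simp: inj_on_def)
  ultimately show ?thesis
    by (metis card_image)
qed

lemma card_doubletons: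
  assumes "finite A"
  shows "card ((\<lambda>(x, y). {x, y}) ` (A \<times> A)) = Suc (card A) choose 2"
proof -
  have "(\<lambda>(x, y). {x, y}) ` (A \<times> A) =
      {B. B \<subseteq> A \<and> card B = 1} \<union> {B. B \<subseteq> A \<and> card B = 2}"
    by (auto simp: card_1_singleton_iff card_2_iff)
  moreover have "finite {B. B \<subseteq> A \<and> card B = k}" for k
    using assms by simp
  ultimately have "card ((\<lambda>(x, y). {x, y}) ` (A \<times> A)) =
      (card A choose 1) + (card A choose 2)"
    using assms by (simp add: card_Un_disjoint n_subsets disjoint_iff)
  then show ?thesis
    by (simp add: numeral_2_eq_2)
qed

definition sorted_nodes :: "btree set \<Rightarrow> btree set \<Rightarrow> btree set" where
  "sorted_nodes A B = case_prod sorted_node ` (A \<times> B)"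

lemma card_sorted_nodes_self: "finite A \<Longrightarrow> card (sorted_nodes A A) = Suc (card A) choose 2"
  unfolding sorted_nodes_def
  by (subst card_image_eq_card_image[where g = "\<lambda>(x, y). {x, y}"])
     (auto simp: sorted_node_eq_iff card_doubletons)

lemma card_sorted_nodes_disjoint:
  assumes "A \<inter> B = {}"
  shows "card (sorted_nodes A B) = card A * card B"
proof -
  have "inj_on (case_prod sorted_node) (A \<times> B)"
    using assms by (auto simp: inj_on_def sorted_node_eq_iff doubleton_eq_iff)
  then show ?thesis
    by (simp add: sorted_nodes_def card_image card_cartesian_product)
qed

lemma leaves_in_canon_min_trees: "T \<in> canon ` min_trees n \<Longrightarrow> leaves T = n"
  by (auto simp: min_trees_def)

lemma canon_min_trees_disjoint: "a \<noteq> b \<Longrightarrow> canon ` min_trees a \<inter> canon ` min_trees b = {}"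
  using leaves_in_canon_min_trees by blast

lemma finite_canon_min_trees: "finite (canon ` min_trees n)"
  using finite_leaves_eq[of n] by (auto simp: min_trees_def intro: finite_subset)

lemma canon_min_trees_rec:
  assumes "2 \<le> n"
  shows "canon ` min_trees n =
    (\<Union>(a, b)\<in>QB n. sorted_nodes (canon ` min_trees a) (canon ` min_trees b))"
    (is "_ = ?R")
proof
  show "canon ` min_trees n \<subseteq> ?R"
  proof
    fix S assume "S \<in> canon ` min_trees n"
    then obtain T where T: "T \<in> min_trees n" "S = canon T"
      by blast
    moreover have "T \<noteq> Leaf"
      using T assms by (auto simp: min_trees_def)
    ultimately obtain l r where lr: "T = Node l r" "S = sorted_node (canon l) (canon r)"
      by (cases T) auto
    then have "l \<in> min_trees (leaves l)" "r \<in> min_trees (leaves r)"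
      and "(leaves l, leaves r) \<in> QB n \<or> (leaves r, leaves l) \<in> QB n"
      using T Node_in_min_trees_iff by auto
    then show "S \<in> ?R"
      using lr sorted_node_commute by (force simp: sorted_nodes_def)
  qed
  show "?R \<subseteq> canon ` min_trees n"
  proof clarify
    fix a b S
    assume ab: "(a, b) \<in> QB n"
      and "S \<in> sorted_nodes (canon ` min_trees a) (canon ` min_trees b)"
    then obtain l r where lr: "l \<in> min_trees a" "r \<in> min_trees b" "S = canon (Node l r)"
      by (auto simp: sorted_nodes_def)
    moreover have "leaves l = a" "leaves r = b"
      using lr by (simp_all add: min_trees_def)
    ultimately have "Node l r \<in> min_trees n"
      using ab Node_in_min_trees_iff by simp
    then show "S \<in> canon ` min_trees n"
      using lr by blast
  qed
qed

lemma sorted_nodes_QB_disjoint: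
  assumes "(a, b) \<in> QB n" "(a', b') \<in> QB n" "(a, b) \<noteq> (a', b')"
  shows "sorted_nodes (canon ` min_trees a) (canon ` min_trees b) \<inter>
    sorted_nodes (canon ` min_trees a') (canon ` min_trees b') = {}"
  using assms
  by (auto simp: QB_def sorted_nodes_def sorted_node_eq_iff doubleton_eq_iff
           dest!: leaves_in_canon_min_trees)

lemma finite_QB: "finite (QB n)"
  by (rule finite_subset[of _ "{..n} \<times> {..n}"]) (auto simp: QB_def)

lemma QB_eq_QB_strict_Un:
  assumes "2 \<le> n"
  shows "QB n = QB_strict n \<union> (if even n then {(n div 2, n div 2)} else {})"
proof -
  have "(n div 2, n div 2) \<in> QB n" if "even n"
    using that assms min_colless_double[of "n div 2"] by (auto simp: QB_def)
  then show ?thesis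
    by (auto simp: QB_def QB_strict_def le_less)
qed

theorem proposition4:
  shows "num_min 1 = 1 \<and>
    (\<forall>n\<ge>2. num_min n =
       (\<Sum>(na, nb)\<in>QB_strict n. num_min na * num_min nb)
       + ((num_min (n div 2) + 1) choose 2) * (if even n then 1 else 0))"
proof (intro conjI allI impI)
  show "num_min 1 = 1"
    unfolding num_min_eq_card_canon min_trees_1 by simp
next
  fix n :: nat
  assume n: "2 \<le> n"
  define F where "F = (\<lambda>(a, b). sorted_nodes (canon ` min_trees a) (canon ` min_trees b))"
  define D where "D = (if even n then {(n div 2, n div 2)} else {})"
  have disjoint: "F p \<inter> F q = {}" if "p \<in> QB n" "q \<in> QB n" "p \<noteq> q" for p q
    using that sorted_nodes_QB_disjoint by (cases p, cases q) (simp add: F_def)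
  have "num_min n = card (\<Union>p\<in>QB n. F p)"
    by (simp add: num_min_eq_card_canon canon_min_trees_rec[OF n] F_def)
  also have "\<dots> = (\<Sum>p\<in>QB n. card (F p))"
    using disjoint by (intro card_UN_disjoint)
      (auto simp: finite_QB F_def sorted_nodes_def finite_canon_min_trees)
  also have "\<dots> = (\<Sum>p\<in>QB_strict n. card (F p)) + (\<Sum>p\<in>D. card (F p))"
    unfolding QB_eq_QB_strict_Un[OF n] D_def
    by (rule sum.union_disjoint) (auto simp: QB_strict_def intro: finite_subset[OF _ finite_QB])
  also have "(\<Sum>p\<in>QB_strict n. card (F p)) =
      (\<Sum>(na, nb)\<in>QB_strict n. num_min na * num_min nb)"
    by (rule sum.cong)
       (auto simp: F_def QB_strict_def num_min_eq_card_canon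
             intro!: card_sorted_nodes_disjoint canon_min_trees_disjoint)
  also have "(\<Sum>p\<in>D. card (F p)) =
      ((num_min (n div 2) + 1) choose 2) * (if even n then 1 else 0)"
    by (simp add: D_def F_def num_min_eq_card_canon card_sorted_nodes_self
        finite_canon_min_trees)
  finally show "num_min n =
       (\<Sum>(na, nb)\<in>QB_strict n. num_min na * num_min nb)
       + ((num_min (n div 2) + 1) choose 2) * (if even n then 1 else 0)" .
qed

end
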